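(* Let $(G,d(\cdot))$ be piecewise $\mathcal C^1$ with continuous reflection and let $\mathcal V\subset\partial G$ satisfy Assumption 2'. For each $x\in\partial G\setminus\mathcal V$ there exist $0<r_x<\mathrm{dist}\big(x,\mathcal V\cup\bigcup_{i\notin\mathcal I(x)}(\partial G\cap\partial G_i)\big)$, $A_x\in(0,\infty)$, and a family of nonnegative functions $\{g_{x,r}\in\mathcal C^2_c(\overline G):r\in(0,r_x]\}$ such that: (1) $\mathrm{supp}[g_{x,r}]\cap\overline G\subset B_r(x)\cap\overline G$; (2) $g_{x,r}(y)=1$ for each $y\in B_{\delta_{x,r}}(x)\cap\overline G$, for some constant $\delta_{x,r}>0$; (3) for $r\in(0,r_x)$, $\sup_{y\in\overline G}|g_{x,r}(y)|\le A_x$, $\sup_{y\in\overline G}|\nabla g_{x,r}(y)|\le A_x/r$, $\sup_{y\in\overline G}\sum_{i,j=1}^J\big|\frac{\partial^2g_{x,r}(y)}{\partial y_i\partial y_j}\big|<A_x/r^2$; (4) $\langle d,\nabla g_{x,r}(y)\rangle\le0$ for all $d\in d(y)$ and $y\in\partial G$.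
   Context: Notation: $B_r(x)=\{y:|y-x|\le r\}$; $\mathrm{dist}(y,A)=\inf_{z\in A}|y-z|$; $\sigma:\mathbb R^J\to\mathbb R^{J\times N}$ continuous, $a=\sigma\sigma^T$. $\mathcal C^2_c(\overline G)$: restrictions to $\overline G$ of functions $\mathcal C^2$ on every open neighbourhood of $\overline G$ with compact support. Piecewise $\mathcal C^1$ with continuous reflection: $G=\bigcap_{i\in\mathcal I}G_i$ nonempty domain, $\mathcal I$ finite, $G_i=\{\phi^i>0\}$, $\partial G_i=\{\phi^i=0\}$ with $\phi^i\in\mathcal C^1(\mathbb R^J)$; $n^i(x)$ the unit inward normal to $\partial G_i$; $\mathcal I(x)=\{i:x\in\partial G_i\}$; $n(x)=\{\sum_{i\in\mathcal I(x)}s_in^i(x):s_i\ge0\}$; $\gamma^i$ continuous vector fields on $\partial G_i$ with $\langle n^i,\gamma^i\rangle>0$; $d(x)=\{\sum_{i\in\mathcal I(x)}s_i\gamma^i(x):s_i\ge0\}$ for $x\in\partial G$. $\mathcal U=\{x\in\partial G:\exists n\in n(x),\ \langle n,d\rangle>0\ \forall d\in d(x)\setminus\{0\}\}$. Assumption 2': $\mathcal V$ is finite with $\mathcal V\supset\partial G\setminus\mathcal U$, and for each $x\in\mathcal V$ there exist a unit vector $v_x$ and constants $r_x>0$, $\alpha_x>0$, $0<c^1_x<1<c^2_x<\infty$ such that, with $\Theta_x=\{z:\langle z,v_x\rangle\ge0\}$, for all $y\in\overline G\cap B_{r_x}(x)$: (1) $\langle v_x,y-x\rangle\ge\alpha_x|y-x|$;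 (2) $\gamma^i(y)\in\Theta_x$ for each $i\in\mathcal I(y)\subset\mathcal I(x)$; (3) for every $r\in(0,r_x/c^2_x)$, $\overline G\cap B_{c^1_xr}(x)\subseteq\{y\in\overline G\cap B_{r_x}(x):\mathrm{dist}(y,x+rv_x+\Theta_x)>0\}\subseteq\overline G\cap B_{c^2_xr}(x)$; (4) $v_x^Ta(y)v_x\ge\alpha_x$ for all $y\in B_{r_x}(x)$. *)

theory Defs
  imports "HOL-Analysis.Analysis"
begin

text \<open>Euclidean space R^J is modelled as real^'n (J = CARD('n)).\<close>

definition grad :: "(real^'n \<Rightarrow> real) \<Rightarrow> real^'n \<Rightarrow> real^'n" where
  "grad f y = (\<chi> k. frechet_derivative f (at y) (axis k 1))"

definition hess :: "(real^'n \<Rightarrow> real) \<Rightarrow> real^'n \<Rightarrow> real^'n^'n" where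
  "hess f y = (\<chi> i j. frechet_derivative (\<lambda>z. grad f z $ j) (at y) (axis i 1))"

definition C1_on :: "(real^'n) set \<Rightarrow> (real^'n \<Rightarrow> real) \<Rightarrow> bool" where
  "C1_on U f \<longleftrightarrow> f differentiable_on U \<and> continuous_on U (grad f)"

definition C2_on :: "(real^'n) set \<Rightarrow> (real^'n \<Rightarrow> real) \<Rightarrow> bool" where
  "C2_on U f \<longleftrightarrow> C1_on U f \<and> (\<forall>j. C1_on U (\<lambda>z. grad f z $ j))"

text \<open>C^2_c(closure G): (an extension of) the function is C^2 with compact support
on some open neighbourhood U of closure G.\<close>
definition C2c_closure :: "(real^'n) set \<Rightarrow> (real^'n \<Rightarrow> real) \<Rightarrow> bool" where
  "C2c_closure G g \<longleftrightarrow> (\<exists>U K. open U \<and> closure G \<subseteq> U \<and> compact K \<and> K \<subseteq> U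
        \<and> (\<forall>y\<in>U - K. g y = 0) \<and> C2_on U g)"

text \<open>Piecewise C^1 domain with continuous reflection:
  G = \<Inter>_{i\<in>I} {phi i > 0}, data phi (defining functions) and gamma (reflection fields).\<close>
definition Gdom :: "'i set \<Rightarrow> ('i \<Rightarrow> real^'n \<Rightarrow> real) \<Rightarrow> (real^'n) set" where
  "Gdom I \<phi> = (\<Inter>i\<in>I. {y. \<phi> i y > 0})"

definition nrm :: "('i \<Rightarrow> real^'n \<Rightarrow> real) \<Rightarrow> 'i \<Rightarrow> real^'n \<Rightarrow> real^'n" where
  "nrm \<phi> i x = grad (\<phi> i) x /\<^sub>R norm (grad (\<phi> i) x)"

definition Iset :: "'i set \<Rightarrow> ('i \<Rightarrow> real^'n \<Rightarrow> real) \<Rightarrow> real^'n \<Rightarrow> 'i set" where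
  "Iset I \<phi> x = {i\<in>I. \<phi> i x = 0}"

definition ncone :: "'i set \<Rightarrow> ('i \<Rightarrow> real^'n \<Rightarrow> real) \<Rightarrow> real^'n \<Rightarrow> (real^'n) set" where
  "ncone I \<phi> x = {(\<Sum>i\<in>Iset I \<phi> x. s i *\<^sub>R nrm \<phi> i x) | s. \<forall>i. s i \<ge> 0}"

definition dcone :: "'i set \<Rightarrow> ('i \<Rightarrow> real^'n \<Rightarrow> real) \<Rightarrow> ('i \<Rightarrow> real^'n \<Rightarrow> real^'n)
      \<Rightarrow> real^'n \<Rightarrow> (real^'n) set" where
  "dcone I \<phi> \<gamma> x = {(\<Sum>i\<in>Iset I \<phi> x. s i *\<^sub>R \<gamma> i x) | s. \<forall>i. s i \<ge> 0}"

definition piecewise_C1_cont_refl ::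
  "'i set \<Rightarrow> ('i \<Rightarrow> real^'n \<Rightarrow> real) \<Rightarrow> ('i \<Rightarrow> real^'n \<Rightarrow> real^'n) \<Rightarrow> bool" where
  "piecewise_C1_cont_refl I \<phi> \<gamma> \<longleftrightarrow>
     finite I \<and> Gdom I \<phi> \<noteq> {} \<and> open (Gdom I \<phi>) \<and> connected (Gdom I \<phi>)
     \<and> (\<forall>i\<in>I. C1_on UNIV (\<phi> i)
          \<and> frontier {y. \<phi> i y > 0} = {y. \<phi> i y = 0}
          \<and> (\<forall>y. \<phi> i y = 0 \<longrightarrow> grad (\<phi> i) y \<noteq> 0)
          \<and> continuous_on {y. \<phi> i y = 0} (\<gamma> i)
          \<and> (\<forall>y. \<phi> i y = 0 \<longrightarrow> nrm \<phi> i y \<bullet> \<gamma> i y > 0))"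

definition Uset :: "'i set \<Rightarrow> ('i \<Rightarrow> real^'n \<Rightarrow> real) \<Rightarrow> ('i \<Rightarrow> real^'n \<Rightarrow> real^'n)
      \<Rightarrow> (real^'n) set" where
  "Uset I \<phi> \<gamma> = {x \<in> frontier (Gdom I \<phi>). \<exists>n\<in>ncone I \<phi> x.
                     \<forall>d\<in>dcone I \<phi> \<gamma> x - {0}. n \<bullet> d > 0}"

definition assumption2' ::
  "'i set \<Rightarrow> ('i \<Rightarrow> real^'n \<Rightarrow> real) \<Rightarrow> ('i \<Rightarrow> real^'n \<Rightarrow> real^'n)
     \<Rightarrow> (real^'n \<Rightarrow> real^'m^'n) \<Rightarrow> (real^'n) set \<Rightarrow> bool" where
  "assumption2' I \<phi> \<gamma> \<sigma> V \<longleftrightarrow>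
     finite V \<and> frontier (Gdom I \<phi>) - Uset I \<phi> \<gamma> \<subseteq> V \<and>
     (\<forall>x\<in>V. \<exists>v r \<alpha> c1 c2. norm v = 1 \<and> r > 0 \<and> \<alpha> > 0 \<and> 0 < c1 \<and> c1 < 1 \<and> 1 < c2 \<and>
        (let \<Theta> = {z. z \<bullet> v \<ge> 0}; Gb = closure (Gdom I \<phi>) in
          (\<forall>y\<in>Gb \<inter> cball x r. v \<bullet> (y - x) \<ge> \<alpha> * norm (y - x)) \<and>
          (\<forall>y\<in>Gb \<inter> cball x r. Iset I \<phi> y \<subseteq> Iset I \<phi> x \<and>
                (\<forall>i\<in>Iset I \<phi> y. \<gamma> i y \<in> \<Theta>)) \<and>
          (\<forall>\<rho>. 0 < \<rho> \<and> \<rho> < r / c2 \<longrightarrow>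
              Gb \<inter> cball x (c1 * \<rho>)
                \<subseteq> {y \<in> Gb \<inter> cball x r. infdist y ((\<lambda>z. x + \<rho> *\<^sub>R v + z) ` \<Theta>) > 0}
            \<and> {y \<in> Gb \<inter> cball x r. infdist y ((\<lambda>z. x + \<rho> *\<^sub>R v + z) ` \<Theta>) > 0}
                \<subseteq> Gb \<inter> cball x (c2 * \<rho>)) \<and>
          (\<forall>y\<in>cball x r. v \<bullet> ((\<sigma> y ** transpose (\<sigma> y)) *v v) \<ge> \<alpha>)))"

end

theory Submission
  imports Defs
begin

text \<open>
  A boundary point \<open>x\<close> outside \<open>V\<close> lies in \<open>\<U>\<close>, so some \<open>n\<close> in the normal cone has
  \<open>\<langle>n, \<gamma>\<^sup>i(x)\<rangle> > 0\<close> for every face active at \<open>x\<close>.  By continuity of the reflection fields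
  there is \<open>c > 0\<close> with \<open>c |d| \<le> \<langle>n, d\<rangle>\<close> for all \<open>d \<in> d(y)\<close> and \<open>y\<close> near \<open>x\<close>, and since
  \<open>\<langle>n, y - x\<rangle>\<close> is a nonnegative combination of first-order expansions of the \<open>\<phi>\<^sup>i \<ge> 0\<close>, the
  closure of \<open>G\<close> lies near \<open>x\<close> in the cone \<open>\<langle>n, y - x\<rangle> \<ge> -(c/4)|y - x|\<close>.

  Take \<open>g\<^sub>r(y) = h(4\<langle>n, y - x\<rangle>/(c r) + 2|y - x|\<^sup>2/r\<^sup>2)\<close> with a nonincreasing \<open>C\<^sup>2\<close> cutoff
  \<open>h\<close> equal to \<open>1\<close> below \<open>1/2\<close> and \<open>0\<close> above \<open>1\<close>.  On that cone the quadratic exceeds \<open>1\<close>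
  outside \<open>B\<^sub>r(x)\<close>, which localises the support; inside, \<open>\<nabla>g\<^sub>r = h'(\<dots>) (4n/(c r) + 4(y - x)/r\<^sup>2)\<close>
  has nonpositive inner product with every \<open>d \<in> d(y)\<close>, and the scaling in \<open>r\<close> gives the bounds
  \<open>A\<close>, \<open>A/r\<close>, \<open>A/r\<^sup>2\<close>.
\<close>

section \<open>A \<open>C\<^sup>2\<close> cutoff function\<close>

definition clamp01 :: "real \<Rightarrow> real" where
  "clamp01 t = max 0 (min 1 t)"

lemma clamp01_bounds: "0 \<le> clamp01 t" "clamp01 t \<le> 1"
  by (auto simp: clamp01_def)

lemma has_field_derivative_at_split:
  fixes f :: "real \<Rightarrow> real"
  assumes "(f has_field_derivative D) (at t within {..t})"
    and "(f has_field_derivative D) (at t within {t..})"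
  shows "(f has_field_derivative D) (at t)"
proof -
  have "{..t} \<union> {t..} = (UNIV :: real set)" by auto
  then show ?thesis using assms unfolding has_field_derivative_iff by (metis Lim_within_Un)
qed

lemma DERIV_comp_clamp01:
  assumes p: "\<And>t. (p has_real_derivative p' t) (at t)" and "p' 0 = 0" "p' 1 = 0"
  shows "((\<lambda>t. p (clamp01 t)) has_real_derivative p' (clamp01 t)) (at t)"
proof -
  have flat: "((\<lambda>t. p (clamp01 t)) has_real_derivative p' (clamp01 t)) (at t within S)"
    if "d > 0" "t \<in> S" "\<forall>s\<in>S. dist s t < d \<longrightarrow> clamp01 s = clamp01 t" "clamp01 t \<in> {0, 1}"
    for S d
  proof -
    have "p' (clamp01 t) = 0" using that(4) assms(2,3) by auto
    moreover have "((\<lambda>t. p (clamp01 t)) has_real_derivative 0) (at t within S)"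
      by (rule has_field_derivative_transform_within[OF DERIV_const that(1,2)]) (use that(3) in auto)
    ultimately show ?thesis by simp
  qed
  have straight: "((\<lambda>t. p (clamp01 t)) has_real_derivative p' (clamp01 t)) (at t within S)"
    if "d > 0" "t \<in> S" "\<forall>s\<in>S. dist s t < d \<longrightarrow> clamp01 s = s" "clamp01 t = t" for S d
    using has_field_derivative_transform_within[OF has_field_derivative_at_within[OF p] that(1,2)] that(3,4)
    by auto
  consider "t < 0" | "t > 1" | "0 < t \<and> t < 1" | "t = 0" | "t = 1" by linarith
  then show ?thesis
  proof cases
    case 1
    show ?thesis using flat[of "-t" UNIV] 1 by (simp add: clamp01_def dist_real_def)
  next
    case 2
    show ?thesis using flat[of "t - 1" UNIV] 2 by (simp add: clamp01_def dist_real_def)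
  next
    case 3
    show ?thesis
      by (rule straight[of "min t (1 - t)" UNIV]) (use 3 in \<open>auto simp: clamp01_def dist_real_def\<close>)
  next
    case 4
    show ?thesis
      using flat[of 1 "{..t}"] straight[of 1 "{t..}"] 4
      by (intro has_field_derivative_at_split) (auto simp: clamp01_def dist_real_def)
  next
    case 5
    show ?thesis
      using straight[of 1 "{..t}"] flat[of 1 "{t..}"] 5
      by (intro has_field_derivative_at_split) (auto simp: clamp01_def dist_real_def)
  qed
qed

definition smoothstep :: "real \<Rightarrow> real" where
  "smoothstep t = 10 * t^3 - 15 * t^4 + 6 * t^5"

definition smoothstep' :: "real \<Rightarrow> real" where
  "smoothstep' t = 30 * (t * (1 - t))^2"

definition smoothstep'' :: "real \<Rightarrow> real" where
  "smoothstep'' t = 60 * t * (1 - t) * (1 - 2 * t)"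

lemma DERIV_smoothstep: "(smoothstep has_real_derivative smoothstep' t) (at t)"
  unfolding smoothstep_def smoothstep'_def
  by (auto intro!: derivative_eq_intros simp: algebra_simps power2_eq_square power3_eq_cube power4_eq_xxxx)

lemma DERIV_smoothstep': "(smoothstep' has_real_derivative smoothstep'' t) (at t)"
  unfolding smoothstep'_def smoothstep''_def
  by (auto intro!: derivative_eq_intros simp: algebra_simps power2_eq_square)

text \<open>\<open>cutoff\<close> is \<open>1\<close> on \<open>]-\<infinity>, 1/2]\<close> and \<open>0\<close> on \<open>[1, \<infinity>[\<close>; it is \<open>C\<^sup>2\<close> because both
  \<open>smoothstep'\<close> and \<open>smoothstep''\<close> vanish at \<open>0\<close> and \<open>1\<close>.\<close>
definition cutoff :: "real \<Rightarrow> real" where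
  "cutoff s = 1 - smoothstep (clamp01 (2 * s - 1))"

definition cutoff' :: "real \<Rightarrow> real" where
  "cutoff' s = - 2 * smoothstep' (clamp01 (2 * s - 1))"

definition cutoff'' :: "real \<Rightarrow> real" where
  "cutoff'' s = - 4 * smoothstep'' (clamp01 (2 * s - 1))"

lemma DERIV_comp_clamp01_rescaled:
  assumes "\<And>t. (p has_real_derivative p' t) (at t)" "p' 0 = 0" "p' 1 = 0"
  shows "((\<lambda>s. p (clamp01 (2 * s - 1))) has_real_derivative p' (clamp01 (2 * s - 1)) * 2) (at s)"
  by (rule DERIV_chain2[OF DERIV_comp_clamp01[OF assms]]) (auto intro!: derivative_eq_intros)

lemma DERIV_cutoff: "(cutoff has_real_derivative cutoff' s) (at s)"
  using DERIV_comp_clamp01_rescaled[OF DERIV_smoothstep] unfolding cutoff_def cutoff'_def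
  by (auto intro!: derivative_eq_intros simp: smoothstep'_def)

lemma DERIV_cutoff': "(cutoff' has_real_derivative cutoff'' s) (at s)"
  using DERIV_comp_clamp01_rescaled[OF DERIV_smoothstep'] unfolding cutoff'_def cutoff''_def
  by (auto intro!: derivative_eq_intros simp: smoothstep''_def)

lemma continuous_on_cutoff'': "continuous_on UNIV cutoff''"
  unfolding cutoff''_def smoothstep''_def clamp01_def by (intro continuous_intros)

lemma cutoff_eq_1: "s \<le> 1/2 \<Longrightarrow> cutoff s = 1"
  by (simp add: cutoff_def clamp01_def smoothstep_def)

lemma cutoff_eq_0: "1 \<le> s \<Longrightarrow> cutoff s = 0"
  by (simp add: cutoff_def clamp01_def smoothstep_def)

lemma cutoff'_eq_0: "s \<le> 1/2 \<or> 1 \<le> s \<Longrightarrow> cutoff' s = 0"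
  by (auto simp: cutoff'_def clamp01_def smoothstep'_def)

lemma cutoff''_eq_0: "s \<le> 1/2 \<or> 1 \<le> s \<Longrightarrow> cutoff'' s = 0"
  by (auto simp: cutoff''_def clamp01_def smoothstep''_def)

lemma cutoff_bounds: "0 \<le> cutoff s" "cutoff s \<le> 1"
proof -
  define t where "t = clamp01 (2 * s - 1)"
  have t: "0 \<le> t" "t \<le> 1" using clamp01_bounds t_def by auto
  have "1 - smoothstep t = (1 - t)^3 * (1 + 3 * t + 6 * t^2)"
    unfolding smoothstep_def by algebra
  also have "\<dots> \<ge> 0" using t by simp
  finally show "0 \<le> cutoff s" unfolding cutoff_def t_def[symmetric] .
  have "smoothstep t = t^3 * (6 * (t - 5/4)^2 + 5/8)"
    unfolding smoothstep_def by algebra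
  also have "\<dots> \<ge> 0" using t by simp
  finally show "cutoff s \<le> 1" unfolding cutoff_def t_def[symmetric] by simp
qed

lemma cutoff'_nonpos: "cutoff' s \<le> 0"
  by (simp add: cutoff'_def smoothstep'_def)

lemma abs_cutoff'_le: "\<bar>cutoff' s\<bar> \<le> 240"
proof -
  define t where "t = clamp01 (2 * s - 1)"
  have "0 \<le> t * (1 - t)" "t * (1 - t) \<le> 1"
    using clamp01_bounds[of "2 * s - 1"] unfolding t_def[symmetric] by (auto simp: mult_le_one)
  then have "(t * (1 - t))^2 \<le> 1" by (simp add: power_le_one)
  then show ?thesis unfolding cutoff'_def smoothstep'_def t_def[symmetric] by simp
qed

lemma abs_cutoff''_le: "\<bar>cutoff'' s\<bar> \<le> 1440"
proof -
  define t where "t = clamp01 (2 * s - 1)"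
  have t: "0 \<le> t" "t \<le> 1" using clamp01_bounds t_def by auto
  then have "\<bar>t * (1 - t) * (1 - 2 * t)\<bar> \<le> 1"
    by (auto simp: abs_mult intro!: mult_le_one)
  then show ?thesis unfolding cutoff''_def smoothstep''_def t_def[symmetric] by (simp add: abs_mult)
qed

section \<open>Composing a function of one variable with a quadratic\<close>

lemma frechet_derivative_eq_grad_inner:
  fixes f :: "real^'n \<Rightarrow> real"
  assumes "f differentiable (at x)"
  shows "frechet_derivative f (at x) v = grad f x \<bullet> v"
proof -
  let ?F = "frechet_derivative f (at x)"
  have lin: "linear ?F" using assms frechet_derivative_works has_derivative_linear by blast
  have "?F v = ?F (\<Sum>i\<in>UNIV. v$i *\<^sub>R axis i 1)"
    using basis_expansion[of v] by (simp add: scalar_mult_eq_scaleR)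
  also have "\<dots> = (\<Sum>i\<in>UNIV. v$i * ?F (axis i 1))"
    using lin by (simp add: linear_sum linear_scale)
  also have "\<dots> = grad f x \<bullet> v" by (simp add: grad_def inner_vec_def mult.commute)
  finally show ?thesis .
qed

lemma grad_eq_of_has_derivative:
  fixes f :: "real^'n \<Rightarrow> real"
  assumes "(f has_derivative (\<lambda>v. u \<bullet> v)) (at y)"
  shows "grad f y = u"
  unfolding grad_def frechet_derivative_at[OF assms, symmetric]
  by (simp add: vec_eq_iff inner_axis)

definition quadratic :: "real^'n \<Rightarrow> real^'n \<Rightarrow> real \<Rightarrow> real \<Rightarrow> real^'n \<Rightarrow> real" where
  "quadratic x n a b y = a * (n \<bullet> (y - x)) + b * ((y - x) \<bullet> (y - x))"

definition quadratic_grad :: "real^'n \<Rightarrow> real^'n \<Rightarrow> real \<Rightarrow> real \<Rightarrow> real^'n \<Rightarrow> real^'n" where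
  "quadratic_grad x n a b y = a *\<^sub>R n + (2 * b) *\<^sub>R (y - x)"

lemma has_derivative_quadratic:
  "(quadratic x n a b has_derivative (\<lambda>v. quadratic_grad x n a b y \<bullet> v)) (at y)"
  unfolding quadratic_def quadratic_grad_def
  by (auto intro!: derivative_eq_intros simp: algebra_simps inner_commute)

lemma has_derivative_comp_quadratic:
  assumes "\<And>s. (h has_real_derivative h' s) (at s)"
  shows "((\<lambda>y. h (quadratic x n a b y)) has_derivative
           (\<lambda>v. (h' (quadratic x n a b y) *\<^sub>R quadratic_grad x n a b y) \<bullet> v)) (at y)"
  using has_derivative_compose[OF has_derivative_quadratic assms[unfolded has_field_derivative_def]]
  by simp

lemma grad_comp_quadratic:
  assumes "\<And>s. (h has_real_derivative h' s) (at s)"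
  shows "grad (\<lambda>y. h (quadratic x n a b y)) y = h' (quadratic x n a b y) *\<^sub>R quadratic_grad x n a b y"
  by (rule grad_eq_of_has_derivative[OF has_derivative_comp_quadratic[OF assms]])

lemma has_derivative_grad_component_comp_quadratic:
  assumes "\<And>s. (h has_real_derivative h' s) (at s)" and "\<And>s. (h' has_real_derivative h'' s) (at s)"
  shows "((\<lambda>z. grad (\<lambda>y. h (quadratic x n a b y)) z $ j) has_derivative
    (\<lambda>v. ((h'' (quadratic x n a b y) * quadratic_grad x n a b y $ j) *\<^sub>R quadratic_grad x n a b y
       + (h' (quadratic x n a b y) * (2 * b)) *\<^sub>R axis j 1) \<bullet> v)) (at y)"
proof -
  let ?q = "quadratic x n a b" and ?u = "quadratic_grad x n a b"
  have "((\<lambda>z. ?u z $ j) has_derivative (\<lambda>v. (2 * b) * v $ j)) (at y)"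
    unfolding quadratic_grad_def
    by (auto intro!: derivative_eq_intros bounded_linear_imp_has_derivative[OF bounded_linear_vec_nth])
  from has_derivative_mult[OF has_derivative_comp_quadratic[OF assms(2)] this]
  show ?thesis by (simp add: grad_comp_quadratic[OF assms(1)] algebra_simps inner_axis')
qed

lemma grad_component_comp_quadratic:
  assumes "\<And>s. (h has_real_derivative h' s) (at s)" and "\<And>s. (h' has_real_derivative h'' s) (at s)"
  shows "grad (\<lambda>z. grad (\<lambda>y. h (quadratic x n a b y)) z $ j) y =
    (h'' (quadratic x n a b y) * quadratic_grad x n a b y $ j) *\<^sub>R quadratic_grad x n a b y
    + (h' (quadratic x n a b y) * (2 * b)) *\<^sub>R axis j 1"
  by (rule grad_eq_of_has_derivative[OF has_derivative_grad_component_comp_quadratic[OF assms]])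

lemma hess_comp_quadratic:
  assumes "\<And>s. (h has_real_derivative h' s) (at s)" and "\<And>s. (h' has_real_derivative h'' s) (at s)"
  shows "hess (\<lambda>y. h (quadratic x n a b y)) y $ i $ j =
    h'' (quadratic x n a b y) * quadratic_grad x n a b y $ i * quadratic_grad x n a b y $ j
    + h' (quadratic x n a b y) * (2 * b) * (if i = j then 1 else 0)"
proof -
  have "hess (\<lambda>y. h (quadratic x n a b y)) y $ i $ j
      = grad (\<lambda>z. grad (\<lambda>y. h (quadratic x n a b y)) z $ j) y $ i"
    by (simp add: hess_def grad_def)
  then show ?thesis by (simp add: grad_component_comp_quadratic[OF assms] axis_def)
qed

lemma C2_on_comp_quadratic:
  assumes h': "\<And>s. (h has_real_derivative h' s) (at s)"
    and h'': "\<And>s. (h' has_real_derivative h'' s) (at s)" "continuous_on UNIV h''"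
  shows "C2_on UNIV (\<lambda>y. h (quadratic x n a b y))"
proof -
  have cont_q: "continuous_on UNIV (quadratic x n a b)" "continuous_on UNIV (quadratic_grad x n a b)"
    unfolding quadratic_def quadratic_grad_def by (intro continuous_intros)+
  have "continuous_on UNIV h'"
    by (rule DERIV_continuous_on[OF has_field_derivative_at_within[OF h''(1)]])
  then have cont_h': "continuous_on UNIV (\<lambda>y. h' (quadratic x n a b y))"
    by (rule continuous_on_compose2[OF _ cont_q(1)]) auto
  have cont_h'': "continuous_on UNIV (\<lambda>y. h'' (quadratic x n a b y))"
    by (rule continuous_on_compose2[OF h''(2) cont_q(1)]) auto
  have "C1_on UNIV (\<lambda>y. h (quadratic x n a b y))"
    unfolding C1_on_def grad_comp_quadratic[OF h', abs_def]
  proof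
    show "(\<lambda>y. h (quadratic x n a b y)) differentiable_on UNIV"
      unfolding differentiable_on_def differentiable_def using has_derivative_comp_quadratic[OF h'] by blast
    show "continuous_on UNIV (\<lambda>y. h' (quadratic x n a b y) *\<^sub>R quadratic_grad x n a b y)"
      using cont_h' cont_q(2) by (intro continuous_intros)
  qed
  moreover have "C1_on UNIV (\<lambda>z. grad (\<lambda>y. h (quadratic x n a b y)) z $ j)" for j
    unfolding C1_on_def grad_component_comp_quadratic[OF h' h''(1), abs_def]
  proof
    show "continuous_on UNIV (\<lambda>y. (h'' (quadratic x n a b y) * quadratic_grad x n a b y $ j) *\<^sub>R
        quadratic_grad x n a b y + (h' (quadratic x n a b y) * (2 * b)) *\<^sub>R axis j 1)"
      using cont_h' cont_h'' cont_q(2) by (intro continuous_intros)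
    show "(\<lambda>z. grad (\<lambda>y. h (quadratic x n a b y)) z $ j) differentiable_on UNIV"
      unfolding differentiable_on_def differentiable_def
      using has_derivative_grad_component_comp_quadratic[OF h' h''(1)] by blast
  qed
  ultimately show ?thesis unfolding C2_on_def by blast
qed

section \<open>Local geometry near a point of \<open>Uset\<close>\<close>

lemma eventually_grad_inner_ge:
  fixes f :: "real^'n \<Rightarrow> real"
  assumes "f differentiable (at x)" "f x = 0" "0 < \<epsilon>"
  shows "eventually (\<lambda>y. 0 \<le> f y \<longrightarrow> - (\<epsilon> * norm (y - x)) \<le> grad f x \<bullet> (y - x)) (nhds x)"
proof -
  have "(f has_derivative frechet_derivative f (at x)) (at x)"
    using assms(1) frechet_derivative_works by blast
  then obtain d where "0 < d" and d: "\<And>y. norm (y - x) < d \<Longrightarrow>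
      norm (f y - f x - frechet_derivative f (at x) (y - x)) \<le> \<epsilon> * norm (y - x)"
    unfolding has_derivative_at_alt using assms(3) by blast
  show ?thesis
    unfolding eventually_nhds_metric
  proof (intro exI[of _ d] conjI allI impI)
    fix y assume "dist y x < d" "0 \<le> f y"
    then show "- (\<epsilon> * norm (y - x)) \<le> grad f x \<bullet> (y - x)"
      using d[of y] assms(2) frechet_derivative_eq_grad_inner[OF assms(1)]
      by (auto simp: dist_norm abs_le_iff)
  qed fact
qed

lemma closure_Gdom_nonneg:
  assumes "continuous_on UNIV (\<phi> i)" "i \<in> I" "y \<in> closure (Gdom I \<phi>)"
  shows "0 \<le> \<phi> i y"
proof -
  have "Gdom I \<phi> \<subseteq> {y. 0 \<le> \<phi> i y}" using assms(2) by (force simp: Gdom_def)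
  moreover have "closed {y. 0 \<le> \<phi> i y}" using assms(1) by (intro closed_Collect_le continuous_on_const)
  ultimately show ?thesis using assms(3) closure_minimal by blast
qed

lemma eventually_ncone_inner_ge:
  assumes "finite I" "\<forall>i\<in>I. \<phi> i differentiable_on UNIV" "n \<in> ncone I \<phi> x" "0 < \<epsilon>"
  shows "eventually (\<lambda>y. y \<in> closure (Gdom I \<phi>) \<longrightarrow> - (\<epsilon> * norm (y - x)) \<le> n \<bullet> (y - x)) (nhds x)"
proof -
  obtain s where s: "\<forall>i. 0 \<le> s i" and n: "n = (\<Sum>i\<in>Iset I \<phi> x. s i *\<^sub>R nrm \<phi> i x)"
    using assms(3) unfolding ncone_def by auto
  define w where "w i = s i * inverse (norm (grad (\<phi> i) x))" for i
  define e where "e = \<epsilon> / (sum w (Iset I \<phi> x) + 1)"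
  have w: "0 \<le> w i" for i using s by (simp add: w_def)
  then have "0 \<le> sum w (Iset I \<phi> x)" by (simp add: sum_nonneg)
  then have "0 < e" "e * sum w (Iset I \<phi> x) \<le> \<epsilon>"
    using assms(4) by (auto simp: e_def field_simps)
  have diff: "\<phi> i differentiable (at y)" "continuous_on UNIV (\<phi> i)" if "i \<in> I" for i y
    using assms(2) that by (simp_all add: differentiable_on_def differentiable_imp_continuous_on)
  have "finite (Iset I \<phi> x)" using assms(1) by (simp add: Iset_def)
  moreover have "\<forall>i\<in>Iset I \<phi> x.
      eventually (\<lambda>y. 0 \<le> \<phi> i y \<longrightarrow> - (e * norm (y - x)) \<le> grad (\<phi> i) x \<bullet> (y - x)) (nhds x)"
    using \<open>0 < e\<close> diff by (auto simp: Iset_def intro: eventually_grad_inner_ge)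
  ultimately have "eventually (\<lambda>y. \<forall>i\<in>Iset I \<phi> x.
      0 \<le> \<phi> i y \<longrightarrow> - (e * norm (y - x)) \<le> grad (\<phi> i) x \<bullet> (y - x)) (nhds x)"
    by (rule eventually_ball_finite)
  then show ?thesis
  proof (rule eventually_mono, intro impI)
    fix y assume y: "y \<in> closure (Gdom I \<phi>)"
      and H: "\<forall>i\<in>Iset I \<phi> x. 0 \<le> \<phi> i y \<longrightarrow> - (e * norm (y - x)) \<le> grad (\<phi> i) x \<bullet> (y - x)"
    have "- (e * sum w (Iset I \<phi> x) * norm (y - x)) = (\<Sum>i\<in>Iset I \<phi> x. w i * - (e * norm (y - x)))"
      unfolding sum_distrib_right[symmetric] by (simp add: algebra_simps)
    also have "\<dots> \<le> (\<Sum>i\<in>Iset I \<phi> x. w i * (grad (\<phi> i) x \<bullet> (y - x)))"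
      using H y w diff(2) by (intro sum_mono mult_left_mono) (auto simp: Iset_def closure_Gdom_nonneg)
    also have "\<dots> = n \<bullet> (y - x)"
      unfolding n nrm_def w_def by (simp add: inner_sum_left divide_inverse_commute mult.assoc)
    finally have "- (e * sum w (Iset I \<phi> x) * norm (y - x)) \<le> n \<bullet> (y - x)" .
    moreover have "e * sum w (Iset I \<phi> x) * norm (y - x) \<le> \<epsilon> * norm (y - x)"
      using \<open>e * sum w (Iset I \<phi> x) \<le> \<epsilon>\<close> by (simp add: mult_right_mono)
    ultimately show "- (\<epsilon> * norm (y - x)) \<le> n \<bullet> (y - x)" by linarith
  qed
qed

lemma eventually_inner_ge_norm:
  fixes f :: "'a::metric_space \<Rightarrow> 'b::real_inner"
  assumes "continuous_on S f" "x \<in> S" "0 < n \<bullet> f x"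
  shows "\<exists>c>0. eventually (\<lambda>y. y \<in> S \<longrightarrow> c * norm (f y) \<le> n \<bullet> f y) (nhds x)"
proof -
  have "f x \<noteq> 0" using assms(3) by auto
  define c where "c = (n \<bullet> f x) / (2 * norm (f x))"
  define g where "g y = n \<bullet> f y - c * norm (f y)" for y
  have "0 < c" using assms(3) \<open>f x \<noteq> 0\<close> by (simp add: c_def)
  have "continuous_on S g" unfolding g_def using assms(1) by (intro continuous_intros)
  moreover have "g x = (n \<bullet> f x) / 2" using \<open>f x \<noteq> 0\<close> by (simp add: g_def c_def)
  ultimately obtain d where "0 < d" and d: "\<forall>y\<in>S. dist y x < d \<longrightarrow> dist (g y) (g x) < g x"
    using assms(2,3) unfolding continuous_on_iff by (metis half_gt_zero)
  have "eventually (\<lambda>y. y \<in> S \<longrightarrow> c * norm (f y) \<le> n \<bullet> f y) (nhds x)"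
    unfolding eventually_nhds_metric
    using \<open>0 < d\<close> d by (intro exI[of _ d]) (auto simp: g_def dist_real_def)
  with \<open>0 < c\<close> show ?thesis by blast
qed

lemma eventually_uniform_angle_reflections:
  assumes "finite I"
    and "\<forall>i\<in>Iset I \<phi> x. continuous_on {y. \<phi> i y = 0} (\<gamma> i) \<and> 0 < n \<bullet> \<gamma> i x"
  shows "\<exists>c>0. eventually (\<lambda>y. \<forall>i\<in>Iset I \<phi> x. \<phi> i y = 0 \<longrightarrow> c * norm (\<gamma> i y) \<le> n \<bullet> \<gamma> i y) (nhds x)"
proof -
  let ?P = "\<lambda>c i. eventually (\<lambda>y. \<phi> i y = 0 \<longrightarrow> c * norm (\<gamma> i y) \<le> n \<bullet> \<gamma> i y) (nhds x)"
  \<comment> \<open>the admissible constants of each face contain an interval \<open>]0, c]\<close>, so finitely many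
    faces share a common one\<close>
  have "eventually (\<lambda>c. ?P c i) (at_right 0)" if i: "i \<in> Iset I \<phi> x" for i
  proof -
    obtain c where "0 < c" and c: "?P c i"
      using eventually_inner_ge_norm[of "{y. \<phi> i y = 0}" "\<gamma> i" x n] assms(2) i
      by (auto simp: Iset_def)
    have "?P c' i" if "c' < c" for c'
      using c
    proof (rule eventually_mono, intro impI)
      fix y assume "\<phi> i y = 0 \<longrightarrow> c * norm (\<gamma> i y) \<le> n \<bullet> \<gamma> i y" "\<phi> i y = 0"
      moreover have "c' * norm (\<gamma> i y) \<le> c * norm (\<gamma> i y)" using that by (simp add: mult_right_mono)
      ultimately show "c' * norm (\<gamma> i y) \<le> n \<bullet> \<gamma> i y" by linarith
    qed
    then show ?thesis unfolding eventually_at_right_field using \<open>0 < c\<close> by blast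
  qed
  moreover have "finite (Iset I \<phi> x)" using assms(1) by (simp add: Iset_def)
  ultimately have "eventually (\<lambda>c. \<forall>i\<in>Iset I \<phi> x. ?P c i) (at_right 0)"
    by (intro eventually_ball_finite) auto
  then have "eventually (\<lambda>c. 0 < c \<and> (\<forall>i\<in>Iset I \<phi> x. ?P c i)) (at_right 0)"
    by (intro eventually_conj eventually_at_right_less)
  then obtain c where "0 < c" "\<forall>i\<in>Iset I \<phi> x. ?P c i"
    using eventually_happens'[OF trivial_limit_at_right_real] by blast
  then show ?thesis
    using eventually_ball_finite[OF \<open>finite (Iset I \<phi> x)\<close>] by (intro exI[of _ c]) auto
qed

lemma eventually_Iset_subset:
  assumes "finite I" "\<forall>i\<in>I. continuous_on UNIV (\<phi> i)"
  shows "eventually (\<lambda>y. Iset I \<phi> y \<subseteq> Iset I \<phi> x) (nhds x)"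
proof -
  have "eventually (\<lambda>y. \<phi> i y \<noteq> 0) (nhds x)" if "i \<in> I" "\<phi> i x \<noteq> 0" for i
  proof -
    have "open {y. \<phi> i y \<noteq> 0}"
      using assms(2) that(1) by (intro open_Collect_neq continuous_on_const) auto
    then show ?thesis using eventually_nhds_in_open that(2) by fastforce
  qed
  then have "eventually (\<lambda>y. \<forall>i\<in>I. \<phi> i x \<noteq> 0 \<longrightarrow> \<phi> i y \<noteq> 0) (nhds x)"
    using assms(1) by (intro eventually_ball_finite) (auto intro: eventually_mono)
  then show ?thesis by (rule eventually_mono) (auto simp: Iset_def)
qed

lemma inner_dcone_ge:
  assumes "Iset I \<phi> y \<subseteq> Iset I \<phi> x"
    and "\<forall>i\<in>Iset I \<phi> x. \<phi> i y = 0 \<longrightarrow> c * norm (\<gamma> i y) \<le> n \<bullet> \<gamma> i y"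
    and "0 \<le> c" "d \<in> dcone I \<phi> \<gamma> y"
  shows "c * norm d \<le> n \<bullet> d"
proof -
  obtain t where t: "\<forall>i. 0 \<le> t i" and d: "d = (\<Sum>i\<in>Iset I \<phi> y. t i *\<^sub>R \<gamma> i y)"
    using assms(4) unfolding dcone_def by auto
  have "c * norm d \<le> c * (\<Sum>i\<in>Iset I \<phi> y. t i * norm (\<gamma> i y))"
    unfolding d using norm_sum[of "\<lambda>i. t i *\<^sub>R \<gamma> i y"] t assms(3)
    by (intro mult_left_mono) auto
  also have "\<dots> \<le> (\<Sum>i\<in>Iset I \<phi> y. t i * (n \<bullet> \<gamma> i y))"
    unfolding sum_distrib_left
  proof (intro sum_mono)
    fix i assume "i \<in> Iset I \<phi> y"
    then have "c * norm (\<gamma> i y) \<le> n \<bullet> \<gamma> i y" using assms(1,2) by (auto simp: Iset_def)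
    then show "c * (t i * norm (\<gamma> i y)) \<le> t i * (n \<bullet> \<gamma> i y)"
      using t by (metis mult.left_commute mult_left_mono)
  qed
  also have "\<dots> = n \<bullet> d" unfolding d by (simp add: inner_sum_right)
  finally show ?thesis .
qed

lemma Uset_normal_pos_on_reflections:
  assumes "x \<in> Uset I \<phi> \<gamma>" "finite I" "\<And>i. i \<in> Iset I \<phi> x \<Longrightarrow> \<gamma> i x \<noteq> 0"
  obtains n where "n \<in> ncone I \<phi> x" "\<forall>i\<in>Iset I \<phi> x. 0 < n \<bullet> \<gamma> i x"
proof -
  obtain n where n: "n \<in> ncone I \<phi> x" and pos: "\<forall>d\<in>dcone I \<phi> \<gamma> x - {0}. 0 < n \<bullet> d"
    using assms(1) unfolding Uset_def by auto
  have "\<gamma> i x \<in> dcone I \<phi> \<gamma> x" if "i \<in> Iset I \<phi> x" for i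
  proof -
    have "finite (Iset I \<phi> x)" using assms(2) by (simp add: Iset_def)
    have "(\<Sum>j\<in>Iset I \<phi> x. (if j = i then 1 else 0) *\<^sub>R \<gamma> j x)
        = (\<Sum>j\<in>Iset I \<phi> x. if j = i then \<gamma> j x else 0)"
      by (rule sum.cong) auto
    also have "\<dots> = \<gamma> i x" using that \<open>finite (Iset I \<phi> x)\<close> by simp
    finally have "(\<Sum>j\<in>Iset I \<phi> x. (if j = i then 1 else 0) *\<^sub>R \<gamma> j x) = \<gamma> i x" .
    then show ?thesis unfolding dcone_def by (intro CollectI exI[of _ "\<lambda>j. if j = i then 1 else 0"]) auto
  qed
  with pos assms(3) have "\<forall>i\<in>Iset I \<phi> x. 0 < n \<bullet> \<gamma> i x" by blast
  with n show ?thesis by (rule that)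
qed

lemma Uset_local_oblique_cone:
  assumes "piecewise_C1_cont_refl I \<phi> \<gamma>" "x \<in> Uset I \<phi> \<gamma>"
  obtains n c \<rho> where "0 < c" "0 < \<rho>"
    "\<forall>y\<in>closure (Gdom I \<phi>). dist y x < \<rho> \<longrightarrow> - (c / 4 * norm (y - x)) \<le> n \<bullet> (y - x)"
    "\<forall>y. dist y x < \<rho> \<longrightarrow> (\<forall>d\<in>dcone I \<phi> \<gamma> y. c * norm d \<le> n \<bullet> d)"
proof -
  have fin: "finite I" and diff: "\<forall>i\<in>I. \<phi> i differentiable_on UNIV"
    and refl: "\<forall>i\<in>Iset I \<phi> x. continuous_on {y. \<phi> i y = 0} (\<gamma> i) \<and> \<gamma> i x \<noteq> 0"
    using assms(1) by (fastforce simp: piecewise_C1_cont_refl_def C1_on_def Iset_def)+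
  then have cont: "\<forall>i\<in>I. continuous_on UNIV (\<phi> i)" by (simp add: differentiable_imp_continuous_on)
  obtain n where n: "n \<in> ncone I \<phi> x" "\<forall>i\<in>Iset I \<phi> x. 0 < n \<bullet> \<gamma> i x"
    using Uset_normal_pos_on_reflections[OF assms(2) fin] refl by blast
  then obtain c where "0 < c"
    and "eventually (\<lambda>y. \<forall>i\<in>Iset I \<phi> x. \<phi> i y = 0 \<longrightarrow> c * norm (\<gamma> i y) \<le> n \<bullet> \<gamma> i y) (nhds x)"
    using eventually_uniform_angle_reflections[OF fin] refl by blast
  moreover have "eventually (\<lambda>y. y \<in> closure (Gdom I \<phi>) \<longrightarrow> - (c / 4 * norm (y - x)) \<le> n \<bullet> (y - x)) (nhds x)"
    using eventually_ncone_inner_ge[OF fin diff n(1), of "c / 4"] \<open>0 < c\<close> by simp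
  moreover have "eventually (\<lambda>y. Iset I \<phi> y \<subseteq> Iset I \<phi> x) (nhds x)"
    by (rule eventually_Iset_subset[OF fin cont])
  ultimately have "eventually (\<lambda>y. (\<forall>i\<in>Iset I \<phi> x. \<phi> i y = 0 \<longrightarrow> c * norm (\<gamma> i y) \<le> n \<bullet> \<gamma> i y)
      \<and> (y \<in> closure (Gdom I \<phi>) \<longrightarrow> - (c / 4 * norm (y - x)) \<le> n \<bullet> (y - x))
      \<and> Iset I \<phi> y \<subseteq> Iset I \<phi> x) (nhds x)"
    by (intro eventually_conj)
  then obtain \<rho> where "0 < \<rho>" and \<rho>: "\<And>y. dist y x < \<rho> \<Longrightarrow>
      (\<forall>i\<in>Iset I \<phi> x. \<phi> i y = 0 \<longrightarrow> c * norm (\<gamma> i y) \<le> n \<bullet> \<gamma> i y)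
      \<and> (y \<in> closure (Gdom I \<phi>) \<longrightarrow> - (c / 4 * norm (y - x)) \<le> n \<bullet> (y - x))
      \<and> Iset I \<phi> y \<subseteq> Iset I \<phi> x"
    unfolding eventually_nhds_metric by blast
  show ?thesis
  proof (rule that[OF \<open>0 < c\<close> \<open>0 < \<rho>\<close>])
    show "\<forall>y\<in>closure (Gdom I \<phi>). dist y x < \<rho> \<longrightarrow> - (c / 4 * norm (y - x)) \<le> n \<bullet> (y - x)"
      using \<rho> by blast
    show "\<forall>y. dist y x < \<rho> \<longrightarrow> (\<forall>d\<in>dcone I \<phi> \<gamma> y. c * norm d \<le> n \<bullet> d)"
    proof (intro allI impI ballI)
      fix y d assume "dist y x < \<rho>" "d \<in> dcone I \<phi> \<gamma> y"
      then show "c * norm d \<le> n \<bullet> d"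
        using \<rho>[of y] \<open>0 < c\<close> by (intro inner_dcone_ge[of I \<phi> y x c \<gamma> n]) auto
    qed
  qed
qed

lemma closed_exceptional_set:
  assumes "piecewise_C1_cont_refl I \<phi> \<gamma>" "finite V"
  shows "closed (V \<union> (\<Union>i\<in>I - Iset I \<phi> x. frontier (Gdom I \<phi>) \<inter> {y. \<phi> i y = 0}))"
proof -
  have "finite I" "\<forall>i\<in>I. continuous_on UNIV (\<phi> i)"
    using assms(1) by (auto simp: piecewise_C1_cont_refl_def C1_on_def differentiable_imp_continuous_on)
  then show ?thesis using assms(2)
    by (intro closed_Un finite_imp_closed closed_UN ballI closed_Int frontier_closed closed_Collect_eq
        continuous_on_const) auto
qed

lemma obtain_radius_below_infdist:
  assumes "closed S" "x \<notin> S"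
  obtains D where "0 < D" "S \<noteq> {} \<longrightarrow> D < infdist x S"
proof
  show "0 < (if S = {} then 1 else infdist x S / 2)"
    using infdist_pos_not_in_closed[OF assms(1) _ assms(2)] by auto
  show "S \<noteq> {} \<longrightarrow> (if S = {} then 1 else infdist x S / 2) < infdist x S"
    using infdist_pos_not_in_closed[OF assms(1) _ assms(2)] by auto
qed

section \<open>The test functions\<close>

definition bump_quadratic :: "real^'n \<Rightarrow> real^'n \<Rightarrow> real \<Rightarrow> real \<Rightarrow> real^'n \<Rightarrow> real" where
  "bump_quadratic x n c r = quadratic x n (4 / (c * r)) (2 / r^2)"

definition bump :: "real^'n \<Rightarrow> real^'n \<Rightarrow> real \<Rightarrow> real \<Rightarrow> real^'n \<Rightarrow> real" where
  "bump x n c r = (\<lambda>y. cutoff (bump_quadratic x n c r y))"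

lemma bump_quadratic_eq:
  assumes "0 < r"
  shows "bump_quadratic x n c r y = 4 / (c * r) * (n \<bullet> (y - x)) + 2 * (norm (y - x) / r)^2"
  using assms by (simp add: bump_quadratic_def quadratic_def power2_norm_eq_inner power_divide)

lemma bump_quadratic_bounds:
  assumes "0 < c" "0 < r"
  shows "2 * (norm (y - x) / r)^2 - 4 * norm n / c * (norm (y - x) / r) \<le> bump_quadratic x n c r y"
    and "bump_quadratic x n c r y \<le> 2 * (norm (y - x) / r)^2 + 4 * norm n / c * (norm (y - x) / r)"
proof -
  have "4 / (c * r) * - (norm n * norm (y - x)) \<le> 4 / (c * r) * (n \<bullet> (y - x))"
    and "4 / (c * r) * (n \<bullet> (y - x)) \<le> 4 / (c * r) * (norm n * norm (y - x))"
    using assms Cauchy_Schwarz_ineq2[of n "y - x"] by (intro mult_left_mono; simp add: abs_le_iff)+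
  moreover have "4 / (c * r) * (norm n * norm (y - x)) = 4 * norm n / c * (norm (y - x) / r)"
    by (simp add: field_simps)
  ultimately show "2 * (norm (y - x) / r)^2 - 4 * norm n / c * (norm (y - x) / r) \<le> bump_quadratic x n c r y"
    and "bump_quadratic x n c r y \<le> 2 * (norm (y - x) / r)^2 + 4 * norm n / c * (norm (y - x) / r)"
    unfolding bump_quadratic_eq[OF assms(2)] by linarith+
qed

lemma bump_quadratic_gt_1_far:
  assumes "0 < c" "0 < r" "(4 * norm n / c + 2) * r \<le> norm (y - x)"
  shows "1 < bump_quadratic x n c r y"
proof -
  define K t where "K = 4 * norm n / c" and "t = norm (y - x) / r"
  have "0 \<le> K" using assms(1) by (simp add: K_def)
  have "K + 2 \<le> t" using assms(2,3) by (simp add: K_def t_def field_simps)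
  then have "2 * 4 \<le> t * (2 * t - K)" using \<open>0 \<le> K\<close> by (intro mult_mono) auto
  then have "1 < 2 * t^2 - K * t" by (simp add: algebra_simps power2_eq_square)
  also have "\<dots> \<le> bump_quadratic x n c r y"
    using bump_quadratic_bounds(1)[OF assms(1,2)] by (simp add: K_def t_def)
  finally show ?thesis .
qed

lemma bump_quadratic_gt_1_supported:
  assumes "0 < c" "0 < r" "r < norm (y - x)" "- (c / 4 * norm (y - x)) \<le> n \<bullet> (y - x)"
  shows "1 < bump_quadratic x n c r y"
proof -
  define t where "t = norm (y - x) / r"
  have "1 < t" using assms(2,3) by (simp add: t_def)
  have "- t = 4 / (c * r) * - (c / 4 * norm (y - x))"
    using assms(1,2) by (simp add: t_def field_simps)
  also have "\<dots> \<le> 4 / (c * r) * (n \<bullet> (y - x))"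
    using assms(1,2,4) by (intro mult_left_mono) auto
  finally have "- t \<le> 4 / (c * r) * (n \<bullet> (y - x))" .
  moreover have "1 < 2 * t^2 - t"
    using mult_strict_mono[of 1 t 1 "2 * t - 1"] \<open>1 < t\<close> by (simp add: algebra_simps power2_eq_square)
  ultimately show ?thesis unfolding bump_quadratic_eq[OF assms(2)] t_def by linarith
qed

lemma bump_quadratic_le_half_near:
  assumes "0 < c" "0 < r" "norm (y - x) * (4 * (4 * norm n / c + 1)) \<le> r"
  shows "bump_quadratic x n c r y \<le> 1/2"
proof -
  define K t where "K = 4 * norm n / c" and "t = norm (y - x) / r"
  have "0 \<le> K" "0 \<le> t" using assms(1,2) by (simp_all add: K_def t_def)
  have "4 * t + 4 * (K * t) \<le> 1"
    using assms(2,3) by (simp add: K_def t_def field_simps)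
  moreover have "0 \<le> K * t" using \<open>0 \<le> K\<close> \<open>0 \<le> t\<close> by simp
  ultimately have "4 * t \<le> 1" by linarith
  then have "4 * t^2 \<le> t" using mult_left_mono[of "4 * t" 1 t] \<open>0 \<le> t\<close> by (simp add: power2_eq_square)
  with \<open>4 * t + 4 * (K * t) \<le> 1\<close> \<open>0 \<le> K * t\<close> \<open>0 \<le> t\<close> have "2 * t^2 + K * t \<le> 1/2" by linarith
  then show ?thesis
    using bump_quadratic_bounds(2)[OF assms(1,2), where x=x and n=n and y=y]
    unfolding K_def t_def by linarith
qed

lemma bump_eq_1_near:
  assumes "0 < c" "0 < r" "norm (y - x) \<le> r / (4 * (4 * norm n / c + 1))"
  shows "bump x n c r y = 1"
proof -
  define K where "K = 4 * norm n / c"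
  have "0 \<le> K" using assms(1) by (simp add: K_def)
  then have "0 < 4 * (K + 1)" by (simp add: add_nonneg_pos)
  with assms(3) have "norm (y - x) * (4 * (K + 1)) \<le> r"
    unfolding K_def[symmetric] by (simp only: pos_le_divide_eq)
  then have "bump_quadratic x n c r y \<le> 1/2"
    unfolding K_def by (rule bump_quadratic_le_half_near[OF assms(1,2)])
  then show ?thesis by (simp add: bump_def cutoff_eq_1)
qed

lemma bump_eq_0_far:
  assumes "0 < c" "0 < r" "(4 * norm n / c + 2) * r \<le> norm (y - x)"
  shows "bump x n c r y = 0"
  using bump_quadratic_gt_1_far[OF assms] by (simp add: bump_def cutoff_eq_0)

lemma grad_bump:
  "grad (bump x n c r) y =
     cutoff' (bump_quadratic x n c r y) *\<^sub>R quadratic_grad x n (4 / (c * r)) (2 / r^2) y"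
  unfolding bump_def bump_quadratic_def by (rule grad_comp_quadratic[OF DERIV_cutoff])

lemma hess_bump:
  "hess (bump x n c r) y $ i $ j =
     cutoff'' (bump_quadratic x n c r y) * quadratic_grad x n (4 / (c * r)) (2 / r^2) y $ i
       * quadratic_grad x n (4 / (c * r)) (2 / r^2) y $ j
     + cutoff' (bump_quadratic x n c r y) * (4 / r^2) * (if i = j then 1 else 0)"
  unfolding bump_def bump_quadratic_def
  by (simp add: hess_comp_quadratic[OF DERIV_cutoff DERIV_cutoff'])

lemma C2c_closure_bump:
  assumes "0 < c" "0 < r"
  shows "C2c_closure G (bump x n c r)"
  unfolding C2c_closure_def
proof (intro exI conjI)
  show "C2_on UNIV (bump x n c r)"
    unfolding bump_def bump_quadratic_def
    by (rule C2_on_comp_quadratic[OF DERIV_cutoff DERIV_cutoff' continuous_on_cutoff''])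
  show "\<forall>y\<in>UNIV - cball x ((4 * norm n / c + 2) * r). bump x n c r y = 0"
    using assms by (auto intro!: bump_eq_0_far simp: dist_norm norm_minus_commute)
qed auto

lemma norm_quadratic_grad_bump_le:
  assumes "0 < c" "0 < r" "norm (y - x) \<le> r"
  shows "norm (quadratic_grad x n (4 / (c * r)) (2 / r^2) y) \<le> (4 * norm n / c + 4) / r"
proof -
  have "norm (quadratic_grad x n (4 / (c * r)) (2 / r^2) y)
      \<le> norm ((4 / (c * r)) *\<^sub>R n) + norm ((2 * (2 / r^2)) *\<^sub>R (y - x))"
    unfolding quadratic_grad_def by (rule norm_triangle_ineq)
  also have "\<dots> = 4 / (c * r) * norm n + 4 / r^2 * norm (y - x)"
    using assms(1,2) by simp
  also have "\<dots> \<le> 4 / (c * r) * norm n + 4 / r^2 * r"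
    using assms by (intro add_left_mono mult_left_mono) auto
  also have "\<dots> = (4 * norm n / c + 4) / r"
    using assms(1,2) by (simp add: field_simps power2_eq_square)
  finally show ?thesis .
qed

text \<open>The coefficient \<open>4 / c\<close> of the linear term is exactly what makes the normal part of the
  gradient dominate the radial part on \<open>B\<^sub>r(x)\<close>.\<close>
lemma inner_quadratic_grad_bump_nonneg:
  assumes "0 < c" "0 < r" "norm (y - x) \<le> r" "c * norm d \<le> n \<bullet> d"
  shows "0 \<le> d \<bullet> quadratic_grad x n (4 / (c * r)) (2 / r^2) y"
proof -
  have "4 / r^2 * (r * norm d) \<le> 4 / (c * r) * (n \<bullet> d)"
    using assms(1,2) mult_left_mono[OF assms(4), of "4 / (c * r)"]
    by (simp add: field_simps power2_eq_square)
  moreover have "- (r * norm d) \<le> d \<bullet> (y - x)"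
    using Cauchy_Schwarz_ineq2[of d "y - x"] mult_right_mono[OF assms(3), of "norm d"]
    by (simp add: abs_le_iff mult.commute)
  then have "4 / r^2 * - (r * norm d) \<le> 4 / r^2 * (d \<bullet> (y - x))"
    by (rule mult_left_mono) simp
  ultimately show ?thesis
    unfolding quadratic_grad_def by (simp add: inner_add_right inner_commute)
qed

lemma abs_mult_mult_add_le:
  fixes a b u v e :: real
  assumes "\<bar>a\<bar> \<le> A" "\<bar>u\<bar> \<le> m" "\<bar>v\<bar> \<le> m" "\<bar>b\<bar> \<le> B" "\<bar>e\<bar> \<le> 1"
  shows "\<bar>a * u * v + b * e\<bar> \<le> A * m^2 + B"
proof -
  have "\<bar>a * u * v\<bar> \<le> A * m * m"
    unfolding abs_mult using assms(1-3) by (intro mult_mono) auto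
  moreover have "\<bar>b * e\<bar> \<le> B * 1"
    unfolding abs_mult using assms(4,5) by (intro mult_mono) auto
  ultimately show ?thesis by (simp add: power2_eq_square abs_triangle_ineq[THEN order_trans])
qed

context
  fixes G :: "(real^'n) set" and x n :: "real^'n" and c \<rho> r :: real
  assumes c_pos: "0 < c" and r_pos: "0 < r"
    and radius: "(4 * norm n / c + 2) * r \<le> \<rho>"
    and supporting_cone: "\<forall>y\<in>closure G. dist y x < \<rho> \<longrightarrow> - (c / 4 * norm (y - x)) \<le> n \<bullet> (y - x)"
begin

lemma bump_quadratic_le_1_imp_near:
  assumes "y \<in> closure G" "bump_quadratic x n c r y \<le> 1"
  shows "norm (y - x) \<le> r"
proof (rule ccontr)
  assume far: "\<not> norm (y - x) \<le> r"
  show False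
  proof (cases "dist y x < \<rho>")
    case True
    then have "- (c / 4 * norm (y - x)) \<le> n \<bullet> (y - x)" using supporting_cone assms(1) by blast
    then have "1 < bump_quadratic x n c r y"
      using far by (intro bump_quadratic_gt_1_supported[OF c_pos r_pos]) auto
    with assms(2) show False by linarith
  next
    case False
    then have "(4 * norm n / c + 2) * r \<le> norm (y - x)" using radius by (simp add: dist_norm)
    then show False using bump_quadratic_gt_1_far[OF c_pos r_pos] assms(2) by fastforce
  qed
qed

lemma closure_support_bump_subset:
  "closure {y. bump x n c r y \<noteq> 0} \<inter> closure G \<subseteq> cball x r \<inter> closure G"
proof -
  have "closure {y. bump x n c r y \<noteq> 0} \<subseteq> {y. bump_quadratic x n c r y \<le> 1}"
  proof (rule closure_minimal)
    show "{y. bump x n c r y \<noteq> 0} \<subseteq> {y. bump_quadratic x n c r y \<le> 1}"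
    proof (intro subsetI CollectI)
      fix y assume "y \<in> {y. bump x n c r y \<noteq> 0}"
      then show "bump_quadratic x n c r y \<le> 1"
        by (cases "1 \<le> bump_quadratic x n c r y") (auto simp: bump_def cutoff_eq_0)
    qed
    show "closed {y. bump_quadratic x n c r y \<le> 1}"
      unfolding bump_quadratic_def quadratic_def by (intro closed_Collect_le continuous_intros)
  qed
  then show ?thesis using bump_quadratic_le_1_imp_near by (auto simp: dist_norm norm_minus_commute)
qed

lemma norm_grad_bump_le:
  assumes "y \<in> closure G"
  shows "norm (grad (bump x n c r) y) \<le> 240 * (4 * norm n / c + 4) / r"
proof (cases "bump_quadratic x n c r y \<le> 1/2 \<or> 1 \<le> bump_quadratic x n c r y")
  case True
  then show ?thesis using c_pos r_pos by (simp add: grad_bump cutoff'_eq_0)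
next
  case False
  then have "norm (y - x) \<le> r" using assms bump_quadratic_le_1_imp_near by simp
  then have "norm (quadratic_grad x n (4 / (c * r)) (2 / r^2) y) \<le> (4 * norm n / c + 4) / r"
    by (rule norm_quadratic_grad_bump_le[OF c_pos r_pos])
  then have "\<bar>cutoff' (bump_quadratic x n c r y)\<bar> * norm (quadratic_grad x n (4 / (c * r)) (2 / r^2) y)
      \<le> 240 * ((4 * norm n / c + 4) / r)"
    by (rule mult_mono[OF abs_cutoff'_le]) auto
  then show ?thesis unfolding grad_bump by simp
qed

lemma sum_abs_hess_bump_le:
  assumes "y \<in> closure G"
  shows "(\<Sum>i\<in>UNIV. \<Sum>j\<in>UNIV. \<bar>hess (bump x n c r) y $ i $ j\<bar>)
    \<le> CARD('n)^2 * ((1440 * (4 * norm n / c + 4)^2 + 960) / r^2)"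
proof -
  let ?q = "bump_quadratic x n c r y" and ?u = "quadratic_grad x n (4 / (c * r)) (2 / r^2) y"
  let ?M = "4 * norm n / c + 4"
  have entry: "\<bar>hess (bump x n c r) y $ i $ j\<bar> \<le> (1440 * ?M^2 + 960) / r^2" for i j
  proof (cases "?q \<le> 1/2 \<or> 1 \<le> ?q")
    case True
    then show ?thesis by (simp add: hess_bump cutoff'_eq_0 cutoff''_eq_0)
  next
    case False
    then have "norm (y - x) \<le> r" using assms bump_quadratic_le_1_imp_near by simp
    then have "norm ?u \<le> ?M / r" by (rule norm_quadratic_grad_bump_le[OF c_pos r_pos])
    then have "\<bar>?u $ k\<bar> \<le> ?M / r" for k using component_le_norm_cart order_trans by blast
    moreover have "\<bar>cutoff' ?q * (4 / r^2)\<bar> \<le> 960 / r^2"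
      using abs_cutoff'_le[of ?q] by (simp add: abs_mult divide_right_mono)
    ultimately have "\<bar>hess (bump x n c r) y $ i $ j\<bar> \<le> 1440 * (?M / r)^2 + 960 / r^2"
      unfolding hess_bump by (intro abs_mult_mult_add_le abs_cutoff''_le) auto
    also have "1440 * (?M / r)^2 + 960 / r^2 = (1440 * ?M^2 + 960) / r^2"
      using r_pos by (simp add: field_simps)
    finally show ?thesis .
  qed
  have "(\<Sum>i\<in>UNIV. \<Sum>j\<in>UNIV. \<bar>hess (bump x n c r) y $ i $ j\<bar>)
      \<le> (\<Sum>i\<in>(UNIV::'n set). \<Sum>j\<in>(UNIV::'n set). (1440 * ?M^2 + 960) / r^2)"
    by (intro sum_mono entry)
  then show ?thesis by (simp add: power2_eq_square)
qed

lemma inner_grad_bump_nonpos: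
  assumes "y \<in> closure G" "\<forall>y. dist y x < \<rho> \<longrightarrow> (\<forall>d\<in>D y. c * norm d \<le> n \<bullet> d)" "d \<in> D y"
  shows "d \<bullet> grad (bump x n c r) y \<le> 0"
proof (cases "bump_quadratic x n c r y \<le> 1/2 \<or> 1 \<le> bump_quadratic x n c r y")
  case True
  then show ?thesis by (simp add: grad_bump cutoff'_eq_0)
next
  case False
  then have near: "norm (y - x) \<le> r" using assms bump_quadratic_le_1_imp_near by simp
  have "(4 * norm n / c + 2) * r = 4 * norm n / c * r + 2 * r" by (simp add: distrib_right)
  moreover have "0 \<le> 4 * norm n / c * r" using c_pos r_pos by simp
  ultimately have "r < \<rho>" using radius r_pos by linarith
  with near have "dist y x < \<rho>" by (simp add: dist_norm)
  then have "c * norm d \<le> n \<bullet> d" using assms(2,3) by blast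
  then have "0 \<le> d \<bullet> quadratic_grad x n (4 / (c * r)) (2 / r^2) y"
    by (rule inner_quadratic_grad_bump_nonneg[OF c_pos r_pos near])
  then show ?thesis
    unfolding grad_bump using cutoff'_nonpos by (simp add: mult_nonpos_nonneg)
qed

lemma bump_test_function:
  assumes "\<forall>y. dist y x < \<rho> \<longrightarrow> (\<forall>d\<in>D y. c * norm d \<le> n \<bullet> d)"
    and "1 \<le> A" "240 * (4 * norm n / c + 4) \<le> A"
    and "CARD('n)^2 * (1440 * (4 * norm n / c + 4)^2 + 960) < A"
  shows "C2c_closure G (bump x n c r) \<and>
    (\<forall>y\<in>closure G. 0 \<le> bump x n c r y) \<and>
    closure {y. bump x n c r y \<noteq> 0} \<inter> closure G \<subseteq> cball x r \<inter> closure G \<and>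
    (\<exists>\<delta>>0. \<forall>y\<in>cball x \<delta> \<inter> closure G. bump x n c r y = 1) \<and>
    (\<forall>y\<in>closure G. \<bar>bump x n c r y\<bar> \<le> A) \<and>
    (\<forall>y\<in>closure G. norm (grad (bump x n c r) y) \<le> A / r) \<and>
    (\<exists>B < A / r^2. \<forall>y\<in>closure G. (\<Sum>i\<in>UNIV. \<Sum>j\<in>UNIV. \<bar>hess (bump x n c r) y $ i $ j\<bar>) \<le> B) \<and>
    (\<forall>y\<in>frontier G. \<forall>d\<in>D y. d \<bullet> grad (bump x n c r) y \<le> 0)"
proof (intro conjI)
  show "C2c_closure G (bump x n c r)" by (rule C2c_closure_bump[OF c_pos r_pos])
  show "\<forall>y\<in>closure G. 0 \<le> bump x n c r y" using cutoff_bounds by (simp add: bump_def)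
  have "\<bar>bump x n c r y\<bar> \<le> 1" for y using cutoff_bounds by (simp add: bump_def)
  then show "\<forall>y\<in>closure G. \<bar>bump x n c r y\<bar> \<le> A" using assms(2) order_trans by blast
  show "closure {y. bump x n c r y \<noteq> 0} \<inter> closure G \<subseteq> cball x r \<inter> closure G"
    by (rule closure_support_bump_subset)
  show "\<exists>\<delta>>0. \<forall>y\<in>cball x \<delta> \<inter> closure G. bump x n c r y = 1"
  proof (intro exI conjI ballI)
    show "0 < r / (4 * (4 * norm n / c + 1))"
      using c_pos r_pos by (simp add: add_nonneg_pos)
    fix y assume "y \<in> cball x (r / (4 * (4 * norm n / c + 1))) \<inter> closure G"
    then show "bump x n c r y = 1"
      by (intro bump_eq_1_near[OF c_pos r_pos]) (simp add: dist_norm norm_minus_commute)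
  qed
  show "\<forall>y\<in>closure G. norm (grad (bump x n c r) y) \<le> A / r"
    using norm_grad_bump_le assms(3) r_pos by (meson divide_right_mono less_imp_le order_trans)
  show "\<exists>B < A / r^2. \<forall>y\<in>closure G. (\<Sum>i\<in>UNIV. \<Sum>j\<in>UNIV. \<bar>hess (bump x n c r) y $ i $ j\<bar>) \<le> B"
    using sum_abs_hess_bump_le assms(4) r_pos
    by (intro exI[of _ "CARD('n)^2 * ((1440 * (4 * norm n / c + 4)^2 + 960) / r^2)"])
      (simp add: divide_strict_right_mono)
  show "\<forall>y\<in>frontier G. \<forall>d\<in>D y. d \<bullet> grad (bump x n c r) y \<le> 0"
    using inner_grad_bump_nonpos[OF _ assms(1)] by (simp add: frontier_def)
qed

end

theorem propositionA6:
  fixes I :: "'i set" and \<phi> :: "'i \<Rightarrow> real^'n \<Rightarrow> real"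
    and \<gamma> :: "'i \<Rightarrow> real^'n \<Rightarrow> real^'n" and \<sigma> :: "real^'n \<Rightarrow> real^'m^'n"
    and V :: "(real^'n) set"
  assumes "piecewise_C1_cont_refl I \<phi> \<gamma>"
    and "continuous_on UNIV \<sigma>"
    and "V \<subseteq> frontier (Gdom I \<phi>)"
    and "assumption2' I \<phi> \<gamma> \<sigma> V"
  shows "\<forall>x \<in> frontier (Gdom I \<phi>) - V.
     \<exists>rx A (g :: real \<Rightarrow> real^'n \<Rightarrow> real).
       0 < rx \<and>
       (let S = V \<union> (\<Union>i\<in>I - Iset I \<phi> x. frontier (Gdom I \<phi>) \<inter> {y. \<phi> i y = 0})
        in S \<noteq> {} \<longrightarrow> rx < infdist x S) \<and>
       0 < A \<and>
       (\<forall>r. 0 < r \<and> r \<le> rx \<longrightarrow>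
          C2c_closure (Gdom I \<phi>) (g r) \<and>
          (\<forall>y\<in>closure (Gdom I \<phi>). g r y \<ge> 0) \<and>
          closure {y. g r y \<noteq> 0} \<inter> closure (Gdom I \<phi>) \<subseteq> cball x r \<inter> closure (Gdom I \<phi>) \<and>
          (\<exists>\<delta>>0. \<forall>y\<in>cball x \<delta> \<inter> closure (Gdom I \<phi>). g r y = 1) \<and>
          (r < rx \<longrightarrow>
             (\<forall>y\<in>closure (Gdom I \<phi>). \<bar>g r y\<bar> \<le> A) \<and>
             (\<forall>y\<in>closure (Gdom I \<phi>). norm (grad (g r) y) \<le> A / r) \<and>
             (\<exists>B < A / r\<^sup>2. \<forall>y\<in>closure (Gdom I \<phi>).
                 (\<Sum>i\<in>UNIV. \<Sum>j\<in>UNIV. \<bar>hess (g r) y $ i $ j\<bar>) \<le> B)) \<and>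
          (\<forall>y\<in>frontier (Gdom I \<phi>). \<forall>d\<in>dcone I \<phi> \<gamma> y. d \<bullet> grad (g r) y \<le> 0))"
  apply (intro ballI)
  subgoal premises prems for x
  proof -
    let ?G = "Gdom I \<phi>"
    let ?S = "V \<union> (\<Union>i\<in>I - Iset I \<phi> x. frontier ?G \<inter> {y. \<phi> i y = 0})"
    have "x \<in> Uset I \<phi> \<gamma>" using prems assms(4) by (auto simp: assumption2'_def)
    then obtain n c \<rho> where "0 < c" "0 < \<rho>"
      and cone: "\<forall>y\<in>closure ?G. dist y x < \<rho> \<longrightarrow> - (c / 4 * norm (y - x)) \<le> n \<bullet> (y - x)"
      and oblique: "\<forall>y. dist y x < \<rho> \<longrightarrow> (\<forall>d\<in>dcone I \<phi> \<gamma> y. c * norm d \<le> n \<bullet> d)"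
      by (rule Uset_local_oblique_cone[OF assms(1)])
    have "closed ?S"
      using closed_exceptional_set[OF assms(1)] assms(4) by (simp add: assumption2'_def)
    moreover have "x \<notin> ?S" using prems by (auto simp: Iset_def)
    ultimately obtain D where "0 < D" and D: "?S \<noteq> {} \<longrightarrow> D < infdist x ?S"
      by (rule obtain_radius_below_infdist)
    define K where "K = 4 * norm n / c"
    define A where "A = CARD('n)^2 * (1440 * (K + 4)^2 + 960) + 240 * (K + 4) + 1"
    define rx where "rx = min (\<rho> / (K + 2)) D"
    have "0 \<le> K" using \<open>0 < c\<close> by (simp add: K_def)
    then have "0 < rx" and radius: "\<And>r. r \<le> rx \<Longrightarrow> (K + 2) * r \<le> \<rho>"
      using \<open>0 < \<rho>\<close> \<open>0 < D\<close> by (auto simp: rx_def pos_le_divide_eq mult.commute)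
    have "1 \<le> A" "240 * (K + 4) \<le> A" "CARD('n)^2 * (1440 * (K + 4)^2 + 960) < A"
      using \<open>0 \<le> K\<close> by (simp_all add: A_def add_nonneg_nonneg add_nonneg_pos)
    note bump_properties =
      bump_test_function[OF \<open>0 < c\<close> _ radius[unfolded K_def] cone oblique this[unfolded K_def]]
    have "0 < A" using \<open>1 \<le> A\<close> by simp
    have "rx \<le> D" by (simp add: rx_def)
    with D have "?S \<noteq> {} \<longrightarrow> rx < infdist x ?S" by linarith
    show ?thesis unfolding Let_def
      by (rule exI[of _ rx], rule exI[of _ A], rule exI[of _ "bump x n c"],
          intro conjI allI impI; (elim conjE)?)
        (simp_all only: bump_properties simp_thms \<open>0 < rx\<close> \<open>?S \<noteq> {} \<longrightarrow> rx < infdist x ?S\<close> \<open>0 < A\<close>,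
         (use bump_properties in blast)+)
  qed
  done

end
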